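(* Let $G\subseteq \mathrm{GL}(N)$ be a quadratic matrix Lie group with reductive Lie algebra $\mathfrak{g}$, and $B:\mathfrak{g}\to\mathfrak{g}$ smooth. Consider the canonical Hamiltonian system on $T^*G$ (points written as pairs of $N\times N$ matrices $(g,p)$) $$\dot g=g\,B(g^\dagger p)^\dagger,\qquad \dot p=-p\,B(g^\dagger p),$$ and apply an $s$-stage SDIRK method with weights $b_i$, step $h$, $h_i=hb_i$, written as follows: with $g_{n,r_0}=g_n$, $p_{n,r_0}=p_n$, for $i=1,\dots,s$ the stage slopes $k^g_{n,i},k^p_{n,i}$ satisfy $$k^g_{n,i}=\Big(g_{n,r_{i-1}}+\tfrac{h_i}{2}k^g_{n,i}\Big)B(\mu_{n,c_i})^\dagger,\qquad k^p_{n,i}=-\Big(p_{n,r_{i-1}}+\tfrac{h_i}{2}k^p_{n,i}\Big)B(\mu_{n,c_i}),$$ $$\mu_{n,c_i}=\Big(g_{n,r_{i-1}}+\tfrac{h_i}{2}k^g_{n,i}\Big)^{\dagger}\Big(p_{n,r_{i-1}}+\tfrac{h_i}{2}k^p_{n,i}\Big),$$ and $g_{n,r_i}=g_{n,r_{i-1}}+h_ik^g_{n,i}$, $p_{n,r_i}=p_{n,r_{i-1}}+h_ik^p_{n,i}$, $g_{n+1}=g_{n,r_s}$, $p_{n+1}=p_{n,r_s}$. Write $B_i=B(\mu_{n,c_i})$ and assume $\mathrm{Id}\pm\tfrac{h_i}{2}B_i$ are invertible. Then $$g_{n,r_i}=g_{n,r_{i-1}}\,\mathrm{cay}(h_iB_i^\dagger),\qquad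 p_{n,r_i}=p_{n,r_{i-1}}\,\mathrm{cay}(h_iB_i)^{-1},$$ hence $g_{n+1}=g_n\prod_{i=1}^s\mathrm{cay}(h_iB_i^\dagger)$ and $p_{n+1}=p_n\prod_{i=1}^s\mathrm{cay}(h_iB_i)^{-1}$. Moreover, with $\mu_{n,r_i}:=g_{n,r_i}^\dagger p_{n,r_i}$, $$\mu_{n,r_i}=\mathrm{cay}(h_iB_i)\,\mu_{n,r_{i-1}}\,\mathrm{cay}(h_iB_i)^{-1},\qquad \mu_{n,c_i}=\Big(\mathrm{Id}-\tfrac{h_i}{2}B_i\Big)^{-1}\mu_{n,r_{i-1}}\Big(\mathrm{Id}+\tfrac{h_i}{2}B_i\Big)^{-1},$$ so that $\mu_{n,r_{i-1}}=(\mathrm{Id}-\tfrac{h_i}{2}B_i)\mu_{n,c_i}(\mathrm{Id}+\tfrac{h_i}{2}B_i)$ and $\mu_{n,r_i}=(\mathrm{Id}+\tfrac{h_i}{2}B_i)\mu_{n,c_i}(\mathrm{Id}-\tfrac{h_i}{2}B_i)$. Also $\mu_{n,c_i}=g_{n,c_i}^\dagger p_{n,c_i}$ with $g_{n,c_i}=\tfrac12(g_{n,r_{i-1}}+g_{n,r_i})$ and $p_{n,c_i}=\tfrac12(p_{n,r_{i-1}}+p_{n,r_i})$.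
   Context: $\dagger$ denotes conjugate transpose; $\mathrm{cay}(\xi)=(\mathrm{Id}-\xi/2)^{-1}(\mathrm{Id}+\xi/2)$. A quadratic matrix Lie group is $G\subseteq\mathrm{GL}(N)$ defined by a quadratic relation with a fixed matrix $J$ (e.g. $\mathrm{O}(n)$, $\mathrm{SO}(n)$, $\mathrm{Sp}(2N)$); its Lie algebra elements satisfy $J\xi+\xi^\dagger J=0$. Reductive means $[\mathfrak{g}^\dagger,\mathfrak{g}]\subset\mathfrak{g}$. The Hamiltonian system above is the reconstruction of the Lie–Poisson system $\dot\mu=[B(\mu),\mu]$, $B=\nabla H^\dagger$, via the momentum map $\mu=g^\dagger p$. An $s$-stage SDIRK has $a_{ij}=b_j$ ($j<i$), $a_{ii}=b_i/2$, $a_{ij}=0$ ($j>i$), weights $b_i$ with $\sum b_i=1$. *)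

theory Defs
  imports "HOL-Analysis.Analysis"
begin

type_synonym 'n cmat = "complex ^'n ^'n"

definition ct :: "'n::finite cmat \<Rightarrow> 'n cmat" where
  "ct A = (\<chi> i j. cnj (A $ j $ i))"

definition cay :: "'n::finite cmat \<Rightarrow> 'n cmat" where
  "cay X = matrix_inv (mat 1 - (1/2::real) *\<^sub>R X) ** (mat 1 + (1/2::real) *\<^sub>R X)"

definition quad_group :: "'n::finite cmat \<Rightarrow> 'n cmat set" where
  "quad_group J = {g. invertible g \<and> ct g ** J ** g = J}"

definition quad_lie_alg :: "'n::finite cmat \<Rightarrow> 'n cmat set" where
  "quad_lie_alg J = {X. J ** X + ct X ** J = 0}"

definition reductive :: "'n::finite cmat set \<Rightarrow> bool" where
  "reductive L \<longleftrightarrow> (\<forall>X\<in>L. \<forall>Y\<in>L. ct X ** Y - Y ** ct X \<in> L)"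

fun Ck :: "nat \<Rightarrow> ('a::real_normed_vector \<Rightarrow> 'b::real_normed_vector) \<Rightarrow> bool" where
  "Ck 0 f = True"
| "Ck (Suc k) f = ((\<forall>x. f differentiable (at x)) \<and>
      (\<forall>v. Ck k (\<lambda>x. frechet_derivative f (at x) v)))"

definition smooth :: "('a::real_normed_vector \<Rightarrow> 'b::real_normed_vector) \<Rightarrow> bool" where
  "smooth f \<longleftrightarrow> (\<forall>k. Ck k f)"

fun oprod :: "(nat \<Rightarrow> 'n::finite cmat) \<Rightarrow> nat \<Rightarrow> 'n cmat" where
  "oprod F 0 = mat 1"
| "oprod F (Suc k) = oprod F k ** F (Suc k)"

end

theory Submission
  imports Defs
begin

text \<open>Each SDIRK stage is an implicit midpoint step of length \<open>h\<^sub>i\<close>. Since the vector field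
  is linear in \<open>(g, p)\<close> once \<open>B\<^sub>i\<close> is frozen, the stage equation \<open>k = (x + h\<^sub>i/2 k) C\<close> says
  that the midpoint is \<open>x (Id - h\<^sub>i/2 C)\<^sup>-\<^sup>1\<close> and the endpoint is the midpoint times
  \<open>Id + h\<^sub>i/2 C\<close>, i.e. \<open>x cay(h\<^sub>i C)\<close>. Taking \<open>C = B\<^sub>i\<^sup>\<dagger>\<close> for \<open>g\<close> and \<open>C = -B\<^sub>i\<close> for \<open>p\<close>
  gives the Cayley factors, and the momentum identities follow by multiplying out
  \<open>g\<^sup>\<dagger>p\<close> at the three points, using that \<open>Id - X\<close> and \<open>Id + X\<close> commute.\<close>

lemma matrix_add_rdistrib: "((A::'a::semiring_1^'n^'m) + B) ** C = A ** C + B ** C"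
  by (simp add: matrix_matrix_mult_def vec_eq_iff sum.distrib distrib_right)

lemma matrix_diff_ldistrib: "(A::'a::ring_1^'n^'m) ** (B - C) = A ** B - A ** C"
  by (simp add: matrix_matrix_mult_def vec_eq_iff sum_subtractf right_diff_distrib)

lemma matrix_diff_rdistrib: "((A::'a::ring_1^'n^'m) - B) ** C = A ** C - B ** C"
  by (simp add: matrix_matrix_mult_def vec_eq_iff sum_subtractf left_diff_distrib)

lemma matrix_mul_uminus_right: "(A::'a::ring_1^'n^'m) ** (- B) = - (A ** B)"
  by (simp add: matrix_matrix_mult_def vec_eq_iff sum_negf)

lemma matrix_mul_scaleR_right: "(A::'a::real_algebra_1^'n^'m) ** (k *\<^sub>R B) = k *\<^sub>R (A ** B)"
  by (simp add: matrix_matrix_mult_def vec_eq_iff scaleR_sum_right)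

lemma mat_1_diff_mult_add_commute:
  "(mat 1 - X) ** (mat 1 + X) = (mat 1 + X) ** (mat 1 - (X::'a::ring_1^'n^'n))"
  by (simp add: matrix_add_ldistrib matrix_add_rdistrib matrix_diff_ldistrib matrix_diff_rdistrib)

lemma matrix_inv_right: "invertible A \<Longrightarrow> A ** matrix_inv A = mat 1"
  unfolding invertible_def matrix_inv_def by (rule conjunct1[OF someI_ex])

lemma matrix_inv_left: "invertible A \<Longrightarrow> matrix_inv A ** A = mat 1"
  unfolding invertible_def matrix_inv_def by (rule conjunct2[OF someI_ex])

lemma matrix_inv_unique:
  fixes A :: "'a::field^'n^'n"
  assumes "A ** X = mat 1"
  shows "matrix_inv A = X"
proof -
  have A: "invertible A"
    using assms invertible_right_inverse by blast
  have "matrix_inv A = matrix_inv A ** (A ** X)"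
    using assms by simp
  also have "\<dots> = X"
    by (simp add: matrix_mul_assoc matrix_inv_left[OF A])
  finally show ?thesis .
qed

lemma matrix_inv_mult:
  fixes A C :: "'a::field^'n^'n"
  assumes "invertible A" "invertible C"
  shows "matrix_inv (matrix_inv A ** C) = matrix_inv C ** A"
  by (rule matrix_inv_unique)
    (metis assms matrix_inv_left matrix_inv_right matrix_mul_assoc matrix_mul_lid)

lemma ct_mult: "ct (A ** B) = ct B ** ct A"
  by (simp add: ct_def matrix_matrix_mult_def vec_eq_iff mult.commute)

lemma ct_add: "ct (A + B) = ct A + ct B"
  by (simp add: ct_def vec_eq_iff)

lemma ct_diff: "ct (A - B) = ct A - ct B"
  by (simp add: ct_def vec_eq_iff)

lemma ct_scaleR: "ct ((k::real) *\<^sub>R A) = k *\<^sub>R ct A"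
  by (simp add: ct_def vec_eq_iff)

lemma ct_mat_1: "ct (mat 1) = mat 1"
  by (simp add: ct_def vec_eq_iff mat_def)

lemma ct_ct: "ct (ct A) = A"
  by (simp add: ct_def vec_eq_iff)

lemma ct_matrix_inv:
  assumes "invertible A"
  shows "ct (matrix_inv A) = matrix_inv (ct A)"
  by (metis assms ct_mat_1 ct_mult matrix_inv_left matrix_inv_unique)

lemma invertible_ct: "invertible A \<Longrightarrow> invertible (ct A)"
  by (metis ct_mat_1 ct_mult invertible_right_inverse matrix_inv_left)

lemma cay_scaleR:
  "cay (t *\<^sub>R X) = matrix_inv (mat 1 - (t/2) *\<^sub>R X) ** (mat 1 + (t/2) *\<^sub>R X)"
  by (simp add: cay_def)

lemma cay_uminus:
  assumes "invertible (mat 1 - (t/2) *\<^sub>R X)" "invertible (mat 1 + (t/2) *\<^sub>R X)"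
  shows "cay (t *\<^sub>R (- X)) = matrix_inv (cay (t *\<^sub>R X))"
  unfolding cay_scaleR using matrix_inv_mult[OF assms] by simp

lemma conjugate_by_inv_mult:
  fixes M P m :: "'a::field^'n^'n"
  assumes M: "invertible M" and P: "invertible P" and commute: "P ** M = M ** P"
  shows "(matrix_inv M ** P) ** (M ** m ** P) ** matrix_inv (matrix_inv M ** P) = P ** m ** M"
proof -
  have "matrix_inv M ** (P ** M) ** m ** (P ** matrix_inv P) ** M = P ** m ** M"
    unfolding commute
    by (simp add: matrix_mul_assoc matrix_inv_left[OF M] matrix_inv_right[OF P])
  then show ?thesis
    by (simp add: matrix_inv_mult[OF M P] matrix_mul_assoc)
qed

lemma implicit_midpoint_stage:
  fixes x k C :: "'n::finite cmat"
  assumes stage: "k = (x + (t/2) *\<^sub>R k) ** C"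
    and inv: "invertible (mat 1 - (t/2) *\<^sub>R C)"
  shows "x + (t/2) *\<^sub>R k = x ** matrix_inv (mat 1 - (t/2) *\<^sub>R C)"
    and "x + t *\<^sub>R k = (x + (t/2) *\<^sub>R k) ** (mat 1 + (t/2) *\<^sub>R C)"
    and "x + t *\<^sub>R k = x ** cay (t *\<^sub>R C)"
proof -
  let ?y = "x + (t/2) *\<^sub>R k" and ?M = "mat 1 - (t/2) *\<^sub>R C"
  have "?y ** ?M = ?y - (t/2) *\<^sub>R (?y ** C)"
    by (simp add: matrix_diff_ldistrib matrix_mul_scaleR_right)
  also have "\<dots> = x"
    by (simp flip: stage)
  finally show mid: "?y = x ** matrix_inv ?M"
    by (metis matrix_inv_right[OF inv] matrix_mul_assoc matrix_mul_rid)
  have "t *\<^sub>R k = (t/2) *\<^sub>R k + (t/2) *\<^sub>R k"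
    by (simp flip: scaleR_add_left)
  then show "x + t *\<^sub>R k = ?y ** (mat 1 + (t/2) *\<^sub>R C)"
    by (simp add: matrix_add_ldistrib matrix_mul_scaleR_right flip: stage)
  with mid show "x + t *\<^sub>R k = x ** cay (t *\<^sub>R C)"
    by (simp add: cay_scaleR matrix_mul_assoc)
qed

lemma midpoint_half_sum: "(1/2::real) *\<^sub>R (x + (x + t *\<^sub>R k)) = x + (t/2) *\<^sub>R k"
  for x k :: "'a::real_vector"
  by (simp add: algebra_simps flip: scaleR_add_left)

lemma sdirk_stage:
  fixes g p kg kp Bm mc :: "'n::finite cmat"
  assumes mc_def: "mc = ct (g + (t/2) *\<^sub>R kg) ** (p + (t/2) *\<^sub>R kp)"
    and kg_eq: "kg = (g + (t/2) *\<^sub>R kg) ** ct Bm"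
    and kp_eq: "kp = - ((p + (t/2) *\<^sub>R kp) ** Bm)"
    and inv_minus: "invertible (mat 1 - (t/2) *\<^sub>R Bm)"
    and inv_plus: "invertible (mat 1 + (t/2) *\<^sub>R Bm)"
  shows "g + t *\<^sub>R kg = g ** cay (t *\<^sub>R ct Bm)
      \<and> p + t *\<^sub>R kp = p ** matrix_inv (cay (t *\<^sub>R Bm))
      \<and> ct (g + t *\<^sub>R kg) ** (p + t *\<^sub>R kp)
          = cay (t *\<^sub>R Bm) ** (ct g ** p) ** matrix_inv (cay (t *\<^sub>R Bm))
      \<and> mc = matrix_inv (mat 1 - (t/2) *\<^sub>R Bm) ** (ct g ** p) ** matrix_inv (mat 1 + (t/2) *\<^sub>R Bm)
      \<and> ct g ** p = (mat 1 - (t/2) *\<^sub>R Bm) ** mc ** (mat 1 + (t/2) *\<^sub>R Bm)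
      \<and> ct (g + t *\<^sub>R kg) ** (p + t *\<^sub>R kp) = (mat 1 + (t/2) *\<^sub>R Bm) ** mc ** (mat 1 - (t/2) *\<^sub>R Bm)
      \<and> mc = ct ((1/2::real) *\<^sub>R (g + (g + t *\<^sub>R kg))) ** ((1/2::real) *\<^sub>R (p + (p + t *\<^sub>R kp)))"
proof -
  define M where "M = mat 1 - (t/2) *\<^sub>R Bm"
  define P where "P = mat 1 + (t/2) *\<^sub>R Bm"
  have ctM: "ct M = mat 1 - (t/2) *\<^sub>R ct Bm"
    by (simp add: M_def ct_diff ct_scaleR ct_mat_1)
  have invM: "invertible M" and invP: "invertible P"
    using inv_minus inv_plus by (simp_all add: M_def P_def)
  have kp_eq': "kp = (p + (t/2) *\<^sub>R kp) ** (- Bm)"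
    using kp_eq by (simp add: matrix_mul_uminus_right)
  have invctM: "invertible (mat 1 - (t/2) *\<^sub>R ct Bm)"
    using invertible_ct[OF invM] by (simp add: ctM)
  have inv_neg: "invertible (mat 1 - (t/2) *\<^sub>R (- Bm))"
    using invP by (simp add: P_def)
  note g_stage = implicit_midpoint_stage[OF kg_eq invctM]
  note p_stage = implicit_midpoint_stage[OF kp_eq' inv_neg]
  have g_mid: "g + (t/2) *\<^sub>R kg = g ** ct (matrix_inv M)"
    using g_stage(1) by (simp add: ct_matrix_inv[OF invM] ctM)
  have p_mid: "p + (t/2) *\<^sub>R kp = p ** matrix_inv P"
    using p_stage(1) by (simp add: P_def)
  have mc_mid: "mc = matrix_inv M ** (ct g ** p) ** matrix_inv P"
    by (simp add: mc_def g_mid p_mid ct_mult ct_ct matrix_mul_assoc)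
  have mc_left: "ct g ** p = M ** mc ** P"
    by (simp add: mc_mid matrix_mul_assoc matrix_inv_right[OF invM] matrix_inv_left[OF invP])
    (simp flip: matrix_mul_assoc add: matrix_inv_left[OF invP])
  have mc_right: "ct (g + t *\<^sub>R kg) ** (p + t *\<^sub>R kp) = P ** mc ** M"
    unfolding g_stage(2) p_stage(2)
    by (simp add: mc_def P_def M_def ct_add ct_scaleR ct_mat_1 ct_mult ct_ct matrix_mul_assoc)
  have cay_M_P: "cay (t *\<^sub>R Bm) = matrix_inv M ** P"
    by (simp add: cay_scaleR M_def P_def)
  have "P ** M = M ** P"
    unfolding M_def P_def by (rule mat_1_diff_mult_add_commute[symmetric])
  then have mc_cay: "ct (g + t *\<^sub>R kg) ** (p + t *\<^sub>R kp)
      = cay (t *\<^sub>R Bm) ** (ct g ** p) ** matrix_inv (cay (t *\<^sub>R Bm))"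
    unfolding mc_right mc_left cay_M_P by (rule conjugate_by_inv_mult[OF invM invP, symmetric])
  have mc_half: "mc = ct ((1/2::real) *\<^sub>R (g + (g + t *\<^sub>R kg))) ** ((1/2::real) *\<^sub>R (p + (p + t *\<^sub>R kp)))"
    unfolding midpoint_half_sum by (rule mc_def)
  show ?thesis
    using g_stage(3) p_stage(3)[unfolded cay_uminus[OF inv_minus inv_plus]] mc_cay
      mc_mid[unfolded M_def P_def] mc_left[unfolded M_def P_def] mc_right[unfolded M_def P_def] mc_half
    by blast
qed

lemma oprod_telescope:
  assumes "\<And>i. i \<in> {1..k} \<Longrightarrow> x i = x (i - 1) ** F i"
  shows "x k = x 0 ** oprod F k"
  using assms by (induction k) (simp_all add: matrix_mul_assoc)

theorem mainTheorem2:
  fixes J :: "'n::finite cmat"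
    and B :: "'n cmat \<Rightarrow> 'n cmat"
    and s :: nat and b :: "nat \<Rightarrow> real" and h :: real and hh :: "nat \<Rightarrow> real"
    and gr pr kg kp mc :: "nat \<Rightarrow> 'n cmat"
  assumes J_inv: "invertible J"
    and red: "reductive (quad_lie_alg J)"
    and B_alg: "\<And>X. X \<in> quad_lie_alg J \<Longrightarrow> B X \<in> quad_lie_alg J"
    and B_smooth: "smooth B"
    and g0_G: "gr 0 \<in> quad_group J"
    and b_sum: "(\<Sum>i=1..s. b i) = 1"
    and hh_def: "\<And>i. hh i = h * b i"
    and mc_def: "\<And>i. i \<in> {1..s} \<Longrightarrow>
        mc i = ct (gr (i - 1) + (hh i / 2) *\<^sub>R kg i) ** (pr (i - 1) + (hh i / 2) *\<^sub>R kp i)"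
    and kg_eq: "\<And>i. i \<in> {1..s} \<Longrightarrow>
        kg i = (gr (i - 1) + (hh i / 2) *\<^sub>R kg i) ** ct (B (mc i))"
    and kp_eq: "\<And>i. i \<in> {1..s} \<Longrightarrow>
        kp i = - ((pr (i - 1) + (hh i / 2) *\<^sub>R kp i) ** B (mc i))"
    and gr_step: "\<And>i. i \<in> {1..s} \<Longrightarrow> gr i = gr (i - 1) + hh i *\<^sub>R kg i"
    and pr_step: "\<And>i. i \<in> {1..s} \<Longrightarrow> pr i = pr (i - 1) + hh i *\<^sub>R kp i"
    and inv_minus: "\<And>i. i \<in> {1..s} \<Longrightarrow> invertible (mat 1 - (hh i / 2) *\<^sub>R B (mc i))"
    and inv_plus: "\<And>i. i \<in> {1..s} \<Longrightarrow> invertible (mat 1 + (hh i / 2) *\<^sub>R B (mc i))"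
  shows "(\<forall>i\<in>{1..s}.
            gr i = gr (i - 1) ** cay (hh i *\<^sub>R ct (B (mc i)))
          \<and> pr i = pr (i - 1) ** matrix_inv (cay (hh i *\<^sub>R B (mc i)))
          \<and> ct (gr i) ** pr i
              = cay (hh i *\<^sub>R B (mc i)) ** (ct (gr (i - 1)) ** pr (i - 1))
                  ** matrix_inv (cay (hh i *\<^sub>R B (mc i)))
          \<and> mc i = matrix_inv (mat 1 - (hh i / 2) *\<^sub>R B (mc i)) ** (ct (gr (i - 1)) ** pr (i - 1))
                  ** matrix_inv (mat 1 + (hh i / 2) *\<^sub>R B (mc i))
          \<and> ct (gr (i - 1)) ** pr (i - 1)
              = (mat 1 - (hh i / 2) *\<^sub>R B (mc i)) ** mc i ** (mat 1 + (hh i / 2) *\<^sub>R B (mc i))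
          \<and> ct (gr i) ** pr i
              = (mat 1 + (hh i / 2) *\<^sub>R B (mc i)) ** mc i ** (mat 1 - (hh i / 2) *\<^sub>R B (mc i))
          \<and> mc i = ct ((1/2::real) *\<^sub>R (gr (i - 1) + gr i)) ** ((1/2::real) *\<^sub>R (pr (i - 1) + pr i)))
      \<and> gr s = gr 0 ** oprod (\<lambda>i. cay (hh i *\<^sub>R ct (B (mc i)))) s
      \<and> pr s = pr 0 ** oprod (\<lambda>i. matrix_inv (cay (hh i *\<^sub>R B (mc i)))) s"
proof -
  {
    fix i assume i: "i \<in> {1..s}"
    note sdirk_stage[OF mc_def[OF i] kg_eq[OF i] kp_eq[OF i] inv_minus[OF i] inv_plus[OF i],
        folded gr_step[OF i] pr_step[OF i]]
  }
  note stages = this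
  moreover have "gr s = gr 0 ** oprod (\<lambda>i. cay (hh i *\<^sub>R ct (B (mc i)))) s"
    by (rule oprod_telescope) (use stages in blast)
  moreover have "pr s = pr 0 ** oprod (\<lambda>i. matrix_inv (cay (hh i *\<^sub>R B (mc i)))) s"
    by (rule oprod_telescope) (use stages in blast)
  ultimately show ?thesis
    by blast
qed

end
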